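(* Let $\{\sigma^{(n)}_{AB}\}_{n\ge1}$ be a sequence of density matrices on a fixed finite-dimensional space $\mathcal H_A\otimes\mathcal H_B$ such that $\lim_{n\to\infty}\sigma^{(n)}_{AB}=\rho_{AB}$ and $\lim_{n\to\infty}\mu(\sigma^{(n)}_{AB})=\lambda$. Then $\mu(\rho_{AB})\leq\lambda$. In particular, if $\lambda=0$ then $\rho_{AB}=\rho_A\otimes\rho_B$ is a product state.
   Context: For a bipartite density matrix $\rho_{AB}$ on $\mathcal H_A\otimes\mathcal H_B$ with reduced states $\rho_A=\mathrm{tr}_B\rho_{AB}$, $\rho_B=\mathrm{tr}_A\rho_{AB}$, the maximal correlation is $\mu(\rho_{AB})=\max |\mathrm{tr}(\rho_{AB}\, X_A\otimes Y_B^\dagger)|$, the maximum over $X_A\in\mathbf L(\mathcal H_A)$, $Y_B\in\mathbf L(\mathcal H_B)$ subject to $\mathrm{tr}(\rho_A X_A)=\mathrm{tr}(\rho_B Y_B)=0$ and $\mathrm{tr}(\rho_A X_AX_A^\dagger)=\mathrm{tr}(\rho_B Y_BY_B^\dagger)=1$. *)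

theory Defs
  imports "HOL-Analysis.Analysis"
begin

text \<open>Operators on a finite-dimensional Hilbert space with orthonormal basis indexed by
  a finite type 'n are represented as complex matrices of type complex^'n^'n.
  The bipartite space H_A (x) H_B is indexed by the product type 'a \<times> 'b.\<close>

definition mtrace :: "complex^'n^'n \<Rightarrow> complex" where
  "mtrace M = (\<Sum>i\<in>UNIV. M $ i $ i)"

definition madj :: "complex^'n^'n \<Rightarrow> complex^'n^'n" where
  "madj M = (\<chi> i j. cnj (M $ j $ i))"

definition mtensor :: "complex^'a^'a \<Rightarrow> complex^'b^'b \<Rightarrow> complex^('a::finite\<times>'b::finite)^('a\<times>'b)" where
  "mtensor X Y = (\<chi> p q. X $ fst p $ fst q * Y $ snd p $ snd q)"

text \<open>Partial traces: ptrB gives rho_A = tr_B rho_AB, ptrA gives rho_B = tr_A rho_AB.\<close>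
definition ptrB :: "complex^('a::finite\<times>'b::finite)^('a\<times>'b) \<Rightarrow> complex^'a^'a" where
  "ptrB R = (\<chi> a a'. \<Sum>b\<in>UNIV. R $ (a,b) $ (a',b))"

definition ptrA :: "complex^('a::finite\<times>'b::finite)^('a\<times>'b) \<Rightarrow> complex^'b^'b" where
  "ptrA R = (\<chi> b b'. \<Sum>a\<in>UNIV. R $ (a,b) $ (a,b'))"

definition density :: "complex^'n^'n \<Rightarrow> bool" where
  "density R \<longleftrightarrow> madj R = R
     \<and> (\<forall>v::complex^'n. let q = (\<Sum>i\<in>UNIV. \<Sum>j\<in>UNIV. cnj (v $ i) * R $ i $ j * v $ j)
                         in Im q = 0 \<and> Re q \<ge> 0)
     \<and> mtrace R = 1"

text \<open>Maximal correlation. The paper's max is rendered as a supremum; 0 is adjoined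
  so that the value is 0 when the feasible set is empty (all values are \<ge> 0 anyway).\<close>
definition maxcorr :: "complex^('a::finite\<times>'b::finite)^('a\<times>'b) \<Rightarrow> real" where
  "maxcorr R = Sup ({cmod (mtrace (R ** mtensor X (madj Y))) | X Y.
        mtrace (ptrB R ** X) = 0 \<and> mtrace (ptrA R ** Y) = 0 \<and>
        mtrace (ptrB R ** (X ** madj X)) = 1 \<and> mtrace (ptrA R ** (Y ** madj Y)) = 1} \<union> {0})"

end

theory Submission
  imports Defs
begin

text \<open>For a density matrix \<open>R\<close> the form \<open>\<langle>Z, W\<rangle> = tr (R Z W\<^sup>\<dagger>)\<close> is positive semidefinite, and
  \<open>tr (R (X \<otimes> Y\<^sup>\<dagger>))\<close>, \<open>tr (\<rho>\<^sub>A X X\<^sup>\<dagger>)\<close>, \<open>tr (\<rho>\<^sub>B Y Y\<^sup>\<dagger>)\<close> are its values at \<open>X \<otimes> 1\<close> and \<open>1 \<otimes> Y\<close>.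
  Hence \<open>2 |tr (R (X \<otimes> Y\<^sup>\<dagger>))| \<le> tr (\<rho>\<^sub>A X X\<^sup>\<dagger>) + tr (\<rho>\<^sub>B Y Y\<^sup>\<dagger>)\<close>, so admissible correlations are
  bounded by 1 and \<open>\<mu>\<close> is a genuine supremum.

  Upper semicontinuity: an admissible pair \<open>(X, Y)\<close> for \<open>\<rho>\<close> can be re-centred and re-normalised
  with respect to the marginals of \<open>\<sigma>\<^sub>n\<close>; the resulting admissible pairs converge to \<open>(X, Y)\<close>,
  their correlations are bounded by \<open>\<mu>(\<sigma>\<^sub>n)\<close>, and in the limit \<open>|tr (\<rho> (X \<otimes> Y\<^sup>\<dagger>))| \<le> \<lambda>\<close>.

  If \<open>\<lambda> = 0\<close>, every admissible correlation of \<open>\<rho>\<close> vanishes, hence by scaling every centred one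
  (a null vector of a positive semidefinite form is orthogonal to everything, which handles
  the non-normalisable case). Testing on centred matrix units gives \<open>\<rho> = \<rho>\<^sub>A \<otimes> \<rho>\<^sub>B\<close>.\<close>

subsection \<open>Positivity of the trace form\<close>

definition sesq_form :: "complex^'n^'n \<Rightarrow> complex^'n \<Rightarrow> complex^'n \<Rightarrow> complex" where
  "sesq_form R v w = (\<Sum>i\<in>UNIV. \<Sum>j\<in>UNIV. cnj (w $ i) * R $ i $ j * v $ j)"

lemma sesq_form_nonneg:
  assumes "density R"
  shows "Im (sesq_form R v v) = 0" "0 \<le> Re (sesq_form R v v)"
  using assms unfolding density_def sesq_form_def Let_def by blast+

lemma sesq_form_cnj:
  assumes "density R"
  shows "sesq_form R w v = cnj (sesq_form R v w)"
proof -
  have hermitian: "madj R = R"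
    using assms by (simp add: density_def)
  have entry_cnj: "cnj (R $ i $ j) = R $ j $ i" for i j
    using arg_cong[OF hermitian, of "\<lambda>M. M $ j $ i"] by (simp add: madj_def)
  have "sesq_form R w v = (\<Sum>j\<in>UNIV. \<Sum>i\<in>UNIV. cnj (v $ i) * R $ i $ j * w $ j)"
    unfolding sesq_form_def by (rule sum.swap)
  also have "\<dots> = cnj (sesq_form R v w)"
    by (simp add: sesq_form_def entry_cnj mult.commute mult.left_commute)
  finally show ?thesis .
qed

lemma sesq_form_diff_scaled:
  "sesq_form R (v - u *s w) (v - u *s w) =
     sesq_form R v v - cnj u * sesq_form R v w - u * sesq_form R w v + u * cnj u * sesq_form R w w"
proof -
  have "cnj ((v - u *s w) $ i) * R $ i $ j * (v - u *s w) $ j =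
      cnj (v $ i) * R $ i $ j * v $ j - cnj u * (cnj (w $ i) * R $ i $ j * v $ j)
      - u * (cnj (v $ i) * R $ i $ j * w $ j) + u * cnj u * (cnj (w $ i) * R $ i $ j * w $ j)"
    for i j by (simp add: algebra_simps)
  then show ?thesis
    unfolding sesq_form_def by (simp add: sum.distrib sum_subtractf sum_distrib_left)
qed

lemma sesq_form_amgm:
  assumes "density R"
  shows "2 * cmod (sesq_form R v w) \<le> Re (sesq_form R v v) + Re (sesq_form R w w)"
proof -
  define c where "c = sesq_form R v w"
  \<comment> \<open>rotate w by the phase of c, so that the cross term becomes the real number cmod c\<close>
  define u where "u = (if c = 0 then 1 else c / cmod c)"
  have "cmod u = 1"
    by (simp add: u_def norm_divide)
  then have u_unit: "u * cnj u = 1"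
    by (metis complex_norm_square of_real_1 power_one)
  have phase: "cnj u * c = cmod c"
  proof (cases "c = 0")
    case False
    have "cnj u * c = (c * cnj c) / cmod c"
      using False by (simp add: u_def mult.commute)
    also have "\<dots> = cmod c"
      using False by (simp add: complex_norm_square[symmetric] power2_eq_square)
    finally show ?thesis .
  qed (simp add: u_def)
  moreover have "u * cnj c = cnj (cnj u * c)"
    by simp
  ultimately have cross: "Re (cnj u * c) = cmod c" "Re (u * cnj c) = cmod c"
    by (simp_all only: complex_cnj_complex_of_real Re_complex_of_real)
  have "0 \<le> Re (sesq_form R (v - u *s w) (v - u *s w))"
    by (rule sesq_form_nonneg[OF assms])
  also have "\<dots> = Re (sesq_form R v v) - 2 * cmod c + Re (sesq_form R w w)"
    unfolding sesq_form_diff_scaled sesq_form_cnj[OF assms, of w v] c_def[symmetric]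
    using cross u_unit by simp
  finally show ?thesis unfolding c_def by simp
qed

definition mscale :: "complex \<Rightarrow> complex^'n^'m \<Rightarrow> complex^'n^'m" where
  "mscale c M = (\<chi> i j. c * M $ i $ j)"

lemma mtrace_mscale: "mtrace (mscale c M) = c * mtrace M"
  by (simp add: mtrace_def mscale_def sum_distrib_left)

lemma madj_mscale: "madj (mscale c M) = mscale (cnj c) (madj M)"
  by (simp add: madj_def mscale_def)

lemma mscale_mult_left: "mscale c A ** B = mscale c (A ** B)"
  by (simp add: matrix_matrix_mult_def mscale_def vec_eq_iff sum_distrib_left algebra_simps)

lemma mscale_mult_right: "A ** mscale c B = mscale c (A ** B)"
  by (simp add: matrix_matrix_mult_def mscale_def vec_eq_iff sum_distrib_left algebra_simps)

lemma mscale_0 [simp]: "mscale 0 M = 0"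
  and mscale_1 [simp]: "mscale 1 M = M"
  by (simp_all add: mscale_def vec_eq_iff)

lemma mtrace_mult_diff: "mtrace (A ** (B - C)) = mtrace (A ** B) - mtrace (A ** C)"
  by (simp add: mtrace_def matrix_matrix_mult_def algebra_simps sum_subtractf)

definition trace_form :: "complex^'n^'n \<Rightarrow> complex^'n^'n \<Rightarrow> complex^'n^'n \<Rightarrow> complex" where
  "trace_form R Z W = mtrace (R ** (Z ** madj W))"

lemma trace_form_sum_columns: "trace_form R Z W = (\<Sum>k\<in>UNIV. sesq_form R (column k Z) (column k W))"
proof -
  have "trace_form R Z W = (\<Sum>i\<in>UNIV. \<Sum>j\<in>UNIV. \<Sum>k\<in>UNIV. cnj (W $ i $ k) * R $ i $ j * Z $ j $ k)"
    unfolding trace_form_def mtrace_def madj_def matrix_matrix_mult_def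
    by (simp add: sum_distrib_left algebra_simps)
  also have "\<dots> = (\<Sum>i\<in>UNIV. \<Sum>k\<in>UNIV. \<Sum>j\<in>UNIV. cnj (W $ i $ k) * R $ i $ j * Z $ j $ k)"
    by (intro sum.cong refl sum.swap)
  also have "\<dots> = (\<Sum>k\<in>UNIV. \<Sum>i\<in>UNIV. \<Sum>j\<in>UNIV. cnj (W $ i $ k) * R $ i $ j * Z $ j $ k)"
    by (rule sum.swap)
  also have "\<dots> = (\<Sum>k\<in>UNIV. sesq_form R (column k Z) (column k W))"
    by (simp add: sesq_form_def column_def)
  finally show ?thesis .
qed

lemma trace_form_nonneg:
  assumes "density R"
  shows "Im (trace_form R Z Z) = 0" "0 \<le> Re (trace_form R Z Z)"
  unfolding trace_form_sum_columns Im_sum Re_sum using sesq_form_nonneg[OF assms]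
  by (simp_all add: sum_nonneg)

lemma trace_form_cnj:
  assumes "density R"
  shows "trace_form R W Z = cnj (trace_form R Z W)"
  unfolding trace_form_sum_columns cnj_sum by (intro sum.cong refl sesq_form_cnj[OF assms])

lemma trace_form_amgm:
  assumes "density R"
  shows "2 * cmod (trace_form R Z W) \<le> Re (trace_form R Z Z) + Re (trace_form R W W)"
proof -
  have "2 * cmod (trace_form R Z W) \<le> (\<Sum>k\<in>UNIV. 2 * cmod (sesq_form R (column k Z) (column k W)))"
    unfolding trace_form_sum_columns sum_distrib_left[symmetric] by (simp add: norm_sum)
  also have "\<dots> \<le> (\<Sum>k\<in>UNIV. Re (sesq_form R (column k Z) (column k Z)) + Re (sesq_form R (column k W) (column k W)))"
    by (intro sum_mono sesq_form_amgm assms)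
  also have "\<dots> = Re (trace_form R Z Z) + Re (trace_form R W W)"
    unfolding trace_form_sum_columns by (simp add: sum.distrib)
  finally show ?thesis .
qed

lemma trace_form_mscale: "trace_form R (mscale c Z) (mscale d W) = c * cnj d * trace_form R Z W"
  by (simp add: trace_form_def madj_mscale mscale_mult_left mscale_mult_right mtrace_mscale)

lemma trace_form_mscale_left: "trace_form R (mscale c Z) W = c * trace_form R Z W"
  using trace_form_mscale[of R c Z 1 W] by simp

lemma trace_form_null_left:
  assumes "density R" and "trace_form R Z Z = 0"
  shows "trace_form R Z W = 0"
proof (rule ccontr)
  assume ne: "trace_form R Z W \<noteq> 0"
  define b where "b = Re (trace_form R W W)"
  define s where "s = (b + 1) / cmod (trace_form R Z W)"
  have "0 \<le> b"
    unfolding b_def by (rule trace_form_nonneg[OF assms(1)])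
  then have s: "0 \<le> s" "s * cmod (trace_form R Z W) = b + 1"
    using ne by (simp_all add: s_def)
  have "2 * cmod (trace_form R (mscale s Z) W) \<le> b"
    using trace_form_amgm[OF assms(1), of "mscale s Z" W]
    by (simp add: trace_form_mscale assms(2) b_def)
  then show False
    using s \<open>0 \<le> b\<close> by (simp add: trace_form_mscale_left norm_mult)
qed

lemma trace_form_null_right:
  assumes "density R" and "trace_form R W W = 0"
  shows "trace_form R Z W = 0"
  using trace_form_null_left[OF assms] trace_form_cnj[OF assms(1)] by (metis complex_cnj_zero)

lemma trace_form_normalize:
  assumes "Im (trace_form R Z Z) = 0" and "0 < Re (trace_form R Z Z)"
  shows "trace_form R (mscale (1 / sqrt (Re (trace_form R Z Z))) Z) (mscale (1 / sqrt (Re (trace_form R Z Z))) Z) = 1"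
proof -
  define r where "r = Re (trace_form R Z Z)"
  have "trace_form R Z Z = of_real r"
    using assms(1) by (simp add: r_def complex_eq_iff)
  moreover have "1 / sqrt r * (1 / sqrt r) * r = 1"
    using assms(2) by (simp add: r_def)
  ultimately show ?thesis
    unfolding trace_form_mscale r_def[symmetric] by (metis complex_cnj_complex_of_real of_real_1 of_real_mult)
qed

subsection \<open>Tensor products and partial traces\<close>

lemma sum_UNIV_prod:
  "(\<Sum>k\<in>UNIV. h k) = (\<Sum>a\<in>UNIV. \<Sum>b\<in>UNIV. h (a, b))"
  by (simp add: sum.cartesian_product split_def)

lemma mtensor_mult: "mtensor A B ** mtensor C D = mtensor (A ** C) (B ** D)"
  by (simp add: vec_eq_iff mtensor_def matrix_matrix_mult_def sum_UNIV_prod sum_product mult_ac)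

lemma madj_mtensor: "madj (mtensor A B) = mtensor (madj A) (madj B)"
  by (simp add: madj_def mtensor_def)

lemma madj_mat_1: "madj (mat 1) = mat 1"
  by (simp add: madj_def mat_def vec_eq_iff)

lemma mtrace_mult_mtensor_mat_1_right: "mtrace (R ** mtensor Z (mat 1)) = mtrace (ptrB R ** Z)"
proof -
  have "mtrace (R ** mtensor Z (mat 1)) = (\<Sum>a\<in>UNIV. \<Sum>b\<in>UNIV. \<Sum>a'\<in>UNIV. R $ (a, b) $ (a', b) * Z $ a' $ a)"
    by (simp add: mtrace_def matrix_matrix_mult_def mtensor_def mat_def sum_UNIV_prod
        mult_if_delta mult_delta_right sum.If_cases if_distrib[where f="sum h" for h])
  also have "\<dots> = (\<Sum>a\<in>UNIV. \<Sum>a'\<in>UNIV. \<Sum>b\<in>UNIV. R $ (a, b) $ (a', b) * Z $ a' $ a)"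
    by (intro sum.cong refl sum.swap)
  also have "\<dots> = mtrace (ptrB R ** Z)"
    by (simp add: mtrace_def matrix_matrix_mult_def ptrB_def sum_distrib_right)
  finally show ?thesis .
qed

lemma mtrace_mult_mtensor_mat_1_left: "mtrace (R ** mtensor (mat 1) W) = mtrace (ptrA R ** W)"
proof -
  have "mtrace (R ** mtensor (mat 1) W) = (\<Sum>a\<in>UNIV. \<Sum>b\<in>UNIV. \<Sum>b'\<in>UNIV. R $ (a, b) $ (a, b') * W $ b' $ b)"
    by (simp add: mtrace_def matrix_matrix_mult_def mtensor_def mat_def sum_UNIV_prod
        mult_if_delta mult_delta_right sum.If_cases if_distrib[where f="sum h" for h])
  also have "\<dots> = (\<Sum>b\<in>UNIV. \<Sum>b'\<in>UNIV. \<Sum>a\<in>UNIV. R $ (a, b) $ (a, b') * W $ b' $ b)"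
    by (subst sum.swap) (intro sum.cong refl sum.swap)
  also have "\<dots> = mtrace (ptrA R ** W)"
    by (simp add: mtrace_def matrix_matrix_mult_def ptrA_def sum_distrib_right)
  finally show ?thesis .
qed

lemma trace_form_ptrB: "trace_form (ptrB R) X Y = trace_form R (mtensor X (mat 1)) (mtensor Y (mat 1))"
  by (simp add: trace_form_def madj_mtensor madj_mat_1 mtensor_mult mtrace_mult_mtensor_mat_1_right)

lemma trace_form_ptrA: "trace_form (ptrA R) X Y = trace_form R (mtensor (mat 1) X) (mtensor (mat 1) Y)"
  by (simp add: trace_form_def madj_mtensor madj_mat_1 mtensor_mult mtrace_mult_mtensor_mat_1_left)

lemma mtensor_mscale_left: "mtensor (mscale c A) B = mscale c (mtensor A B)"
  and mtensor_mscale_right: "mtensor A (mscale c B) = mscale c (mtensor A B)"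
  by (simp_all add: mtensor_def mscale_def vec_eq_iff mult_ac)

lemma mtensor_diff_left: "mtensor (A - A') B = mtensor A B - mtensor A' B"
  and mtensor_diff_right: "mtensor A (B - B') = mtensor A B - mtensor A B'"
  by (simp_all add: mtensor_def vec_eq_iff algebra_simps)

lemma madj_diff: "madj (A - B) = madj A - madj B"
  by (simp add: madj_def vec_eq_iff)

abbreviation corr :: "complex^('a::finite\<times>'b::finite)^('a\<times>'b) \<Rightarrow> complex^'a^'a \<Rightarrow> complex^'b^'b \<Rightarrow> complex"
  where "corr R X Y \<equiv> mtrace (R ** mtensor X (madj Y))"

lemma corr_eq_trace_form: "corr R X Y = trace_form R (mtensor X (mat 1)) (mtensor (mat 1) Y)"
  by (simp add: trace_form_def madj_mtensor madj_mat_1 mtensor_mult)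

lemma mtensor_mat_1: "mtensor (mat 1) (mat 1) = mat 1"
  by (simp add: mtensor_def mat_def vec_eq_iff prod_eq_iff)

lemma mtrace_ptrB: "mtrace (ptrB R) = mtrace R"
  using mtrace_mult_mtensor_mat_1_right[of R "mat 1"] by (simp add: mtensor_mat_1)

lemma mtrace_ptrA: "mtrace (ptrA R) = mtrace R"
  using mtrace_mult_mtensor_mat_1_left[of R "mat 1"] by (simp add: mtensor_mat_1)

lemma marginal_trace_form_nonneg:
  assumes "density R"
  shows "Im (trace_form (ptrB R) X X) = 0" "0 \<le> Re (trace_form (ptrB R) X X)"
    and "Im (trace_form (ptrA R) Y Y) = 0" "0 \<le> Re (trace_form (ptrA R) Y Y)"
  unfolding trace_form_ptrB trace_form_ptrA by (simp_all add: trace_form_nonneg[OF assms])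

lemma corr_amgm:
  assumes "density R"
  shows "2 * cmod (corr R X Y) \<le> Re (trace_form (ptrB R) X X) + Re (trace_form (ptrA R) Y Y)"
  unfolding corr_eq_trace_form trace_form_ptrB trace_form_ptrA by (rule trace_form_amgm[OF assms])

lemma corr_mscale: "corr R (mscale c X) (mscale d Y) = c * cnj d * corr R X Y"
  by (simp add: madj_mscale mtensor_mscale_left mtensor_mscale_right mscale_mult_right mtrace_mscale)

subsection \<open>Maximal correlation\<close>

definition admissible :: "complex^('a::finite\<times>'b::finite)^('a\<times>'b) \<Rightarrow> complex^'a^'a \<Rightarrow> complex^'b^'b \<Rightarrow> bool"
  where "admissible R X Y \<longleftrightarrow>
    mtrace (ptrB R ** X) = 0 \<and> mtrace (ptrA R ** Y) = 0 \<and>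
    trace_form (ptrB R) X X = 1 \<and> trace_form (ptrA R) Y Y = 1"

lemma maxcorr_eq_Sup_admissible:
  "maxcorr R = Sup ({cmod (corr R X Y) | X Y. admissible R X Y} \<union> {0})"
  by (simp add: maxcorr_def admissible_def trace_form_def)

lemma admissible_corr_le_1:
  assumes "density R" and "admissible R X Y"
  shows "cmod (corr R X Y) \<le> 1"
  using corr_amgm[OF assms(1), of X Y] assms(2) by (simp add: admissible_def)

lemma bdd_above_admissible_corr:
  assumes "density R"
  shows "bdd_above ({cmod (corr R X Y) | X Y. admissible R X Y} \<union> {0})"
  using admissible_corr_le_1[OF assms] by (intro bdd_aboveI[where M=1]) auto

lemma admissible_corr_le_maxcorr:
  assumes "density R" and "admissible R X Y"
  shows "cmod (corr R X Y) \<le> maxcorr R"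
  unfolding maxcorr_eq_Sup_admissible
  by (rule cSup_upper[OF _ bdd_above_admissible_corr[OF assms(1)]]) (use assms(2) in blast)

lemma maxcorr_nonneg:
  assumes "density R"
  shows "0 \<le> maxcorr R"
  unfolding maxcorr_eq_Sup_admissible
  by (rule cSup_upper[OF _ bdd_above_admissible_corr[OF assms]]) simp

lemma maxcorr_le:
  assumes "0 \<le> c" and "\<And>X Y. admissible R X Y \<Longrightarrow> cmod (corr R X Y) \<le> c"
  shows "maxcorr R \<le> c"
  unfolding maxcorr_eq_Sup_admissible by (rule cSup_least) (use assms in auto)

subsection \<open>Upper semicontinuity\<close>

lemma tendsto_matrixI:
  assumes "\<And>i j. ((\<lambda>x. A x $ i $ j) \<longlongrightarrow> B $ i $ j) F"
  shows "(A \<longlongrightarrow> B) F"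
  by (intro vec_tendstoI) (use assms in auto)

lemma tendsto_matrix_nth [tendsto_intros]:
  "(A \<longlongrightarrow> B) F \<Longrightarrow> ((\<lambda>x. A x $ i $ j) \<longlongrightarrow> B $ i $ j) F"
  by (intro tendsto_vec_nth)

lemma tendsto_mmult [tendsto_intros]:
  fixes A :: "'x \<Rightarrow> complex^'n^'m"
  shows "(A \<longlongrightarrow> A0) F \<Longrightarrow> (B \<longlongrightarrow> B0) F \<Longrightarrow> ((\<lambda>x. A x ** B x) \<longlongrightarrow> A0 ** B0) F"
  unfolding matrix_matrix_mult_def by (intro tendsto_matrixI) (simp, intro tendsto_intros)

lemma tendsto_madj [tendsto_intros]:
  "(A \<longlongrightarrow> A0) F \<Longrightarrow> ((\<lambda>x. madj (A x)) \<longlongrightarrow> madj A0) F"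
  unfolding madj_def by (intro tendsto_matrixI) (simp, intro tendsto_intros)

lemma tendsto_mtrace [tendsto_intros]:
  "(A \<longlongrightarrow> A0) F \<Longrightarrow> ((\<lambda>x. mtrace (A x)) \<longlongrightarrow> mtrace A0) F"
  unfolding mtrace_def by (intro tendsto_intros)

lemma tendsto_mtensor [tendsto_intros]:
  "(A \<longlongrightarrow> A0) F \<Longrightarrow> (B \<longlongrightarrow> B0) F \<Longrightarrow> ((\<lambda>x. mtensor (A x) (B x)) \<longlongrightarrow> mtensor A0 B0) F"
  unfolding mtensor_def by (intro tendsto_matrixI) (simp, intro tendsto_intros)

lemma tendsto_ptrB [tendsto_intros]:
  "(A \<longlongrightarrow> A0) F \<Longrightarrow> ((\<lambda>x. ptrB (A x)) \<longlongrightarrow> ptrB A0) F"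
  unfolding ptrB_def by (intro tendsto_matrixI) (simp, intro tendsto_intros)

lemma tendsto_ptrA [tendsto_intros]:
  "(A \<longlongrightarrow> A0) F \<Longrightarrow> ((\<lambda>x. ptrA (A x)) \<longlongrightarrow> ptrA A0) F"
  unfolding ptrA_def by (intro tendsto_matrixI) (simp, intro tendsto_intros)

lemma tendsto_mscale [tendsto_intros]:
  "(c \<longlongrightarrow> c0) F \<Longrightarrow> (A \<longlongrightarrow> A0) F \<Longrightarrow> ((\<lambda>x. mscale (c x) (A x)) \<longlongrightarrow> mscale c0 A0) F"
  unfolding mscale_def by (intro tendsto_matrixI) (simp, intro tendsto_intros)

lemma density_limit:
  fixes \<sigma> :: "nat \<Rightarrow> complex^'n^'n"
  assumes dens: "\<forall>\<^sub>F n in sequentially. density (\<sigma> n)" and lim: "\<sigma> \<longlonglongrightarrow> \<rho>"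
  shows "density \<rho>"
proof -
  have "madj \<rho> - \<rho> \<in> {0}"
    by (rule Lim_in_closed_set[where f="\<lambda>n. madj (\<sigma> n) - \<sigma> n", OF _ eventually_mono[OF dens]])
      (simp_all add: density_def, intro tendsto_intros lim)
  moreover have "mtrace \<rho> \<in> {1}"
    by (rule Lim_in_closed_set[where f="\<lambda>n. mtrace (\<sigma> n)", OF _ eventually_mono[OF dens]])
      (simp_all add: density_def, intro tendsto_intros lim)
  moreover have "(\<Sum>i\<in>UNIV. \<Sum>j\<in>UNIV. cnj (v $ i) * \<rho> $ i $ j * v $ j) \<in> {z. Im z = 0 \<and> 0 \<le> Re z}"
    for v :: "complex^'n"
  proof (rule Lim_in_closed_set[where f="\<lambda>n. \<Sum>i\<in>UNIV. \<Sum>j\<in>UNIV. cnj (v $ i) * \<sigma> n $ i $ j * v $ j",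
        OF _ eventually_mono[OF dens]])
    show "closed {z. Im z = 0 \<and> 0 \<le> Re z}"
      by (intro closed_Collect_conj closed_Collect_eq closed_Collect_le continuous_intros)
  qed (simp_all add: density_def Let_def, intro tendsto_intros lim)
  ultimately show ?thesis
    by (simp add: density_def Let_def)
qed

lemma normalized_centred_approximants:
  fixes M :: "nat \<Rightarrow> complex^'n^'n"
  assumes lim: "M \<longlonglongrightarrow> M0"
    and trace: "\<forall>\<^sub>F n in sequentially. mtrace (M n) = 1"
    and real: "\<forall>\<^sub>F n in sequentially. \<forall>Z. Im (trace_form (M n) Z Z) = 0"
    and centred: "mtrace (M0 ** X) = 0" and normalized: "trace_form M0 X X = 1"
  obtains Xs where "Xs \<longlonglongrightarrow> X"
    and "\<forall>\<^sub>F n in sequentially. mtrace (M n ** Xs n) = 0 \<and> trace_form (M n) (Xs n) (Xs n) = 1"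
proof -
  define Z where "Z n = X - mscale (mtrace (M n ** X)) (mat 1)" for n
  define r where "r n = Re (trace_form (M n) (Z n) (Z n))" for n
  define Xs where "Xs n = mscale (1 / sqrt (r n)) (Z n)" for n
  have "Z \<longlonglongrightarrow> X - mscale (mtrace (M0 ** X)) (mat 1)"
    unfolding Z_def by (intro tendsto_intros lim)
  then have Z: "Z \<longlonglongrightarrow> X"
    by (simp add: centred)
  have "r \<longlonglongrightarrow> Re (trace_form M0 X X)"
    unfolding r_def trace_form_def by (intro tendsto_intros lim Z)
  then have r: "r \<longlonglongrightarrow> 1"
    by (simp add: normalized)
  have "Xs \<longlonglongrightarrow> mscale (1 / sqrt 1) X"
    unfolding Xs_def by (intro tendsto_intros r Z) simp
  then have "Xs \<longlonglongrightarrow> X"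
    by simp
  moreover have "\<forall>\<^sub>F n in sequentially. mtrace (M n ** Xs n) = 0 \<and> trace_form (M n) (Xs n) (Xs n) = 1"
    using trace real order_tendstoD(1)[OF r zero_less_one]
  proof eventually_elim
    case (elim n)
    have "mtrace (M n ** Z n) = 0"
      using elim by (simp add: Z_def mtrace_mult_diff mscale_mult_right mtrace_mscale)
    then show ?case
      using elim trace_form_normalize[of "M n" "Z n"]
      by (simp add: Xs_def r_def mscale_mult_right mtrace_mscale)
  qed
  ultimately show ?thesis
    using that by blast
qed

lemma admissible_corr_le_lim_maxcorr:
  fixes \<sigma> :: "nat \<Rightarrow> complex^('a::finite\<times>'b::finite)^('a\<times>'b)"
  assumes dens: "\<forall>\<^sub>F n in sequentially. density (\<sigma> n)" and lim: "\<sigma> \<longlonglongrightarrow> \<rho>"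
    and maxcorr_lim: "(\<lambda>n. maxcorr (\<sigma> n)) \<longlonglongrightarrow> lam" and adm: "admissible \<rho> X Y"
  shows "cmod (corr \<rho> X Y) \<le> lam"
proof -
  have marginal_B: "\<forall>\<^sub>F n in sequentially. mtrace (ptrB (\<sigma> n)) = 1 \<and> (\<forall>Z. Im (trace_form (ptrB (\<sigma> n)) Z Z) = 0)"
    and marginal_A: "\<forall>\<^sub>F n in sequentially. mtrace (ptrA (\<sigma> n)) = 1 \<and> (\<forall>Z. Im (trace_form (ptrA (\<sigma> n)) Z Z) = 0)"
    using dens by (eventually_elim, simp add: mtrace_ptrB mtrace_ptrA marginal_trace_form_nonneg density_def)+
  obtain Xs where Xs: "Xs \<longlonglongrightarrow> X"
    and Xs_adm: "\<forall>\<^sub>F n in sequentially. mtrace (ptrB (\<sigma> n) ** Xs n) = 0 \<and> trace_form (ptrB (\<sigma> n)) (Xs n) (Xs n) = 1"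
    by (rule normalized_centred_approximants[OF tendsto_ptrB[OF lim]])
      (use marginal_B adm in \<open>auto elim: eventually_mono simp: admissible_def\<close>)
  obtain Ys where Ys: "Ys \<longlonglongrightarrow> Y"
    and Ys_adm: "\<forall>\<^sub>F n in sequentially. mtrace (ptrA (\<sigma> n) ** Ys n) = 0 \<and> trace_form (ptrA (\<sigma> n)) (Ys n) (Ys n) = 1"
    by (rule normalized_centred_approximants[OF tendsto_ptrA[OF lim]])
      (use marginal_A adm in \<open>auto elim: eventually_mono simp: admissible_def\<close>)
  have bound: "\<forall>\<^sub>F n in sequentially. cmod (corr (\<sigma> n) (Xs n) (Ys n)) \<le> maxcorr (\<sigma> n)"
    using dens Xs_adm Ys_adm
    by eventually_elim (simp add: admissible_corr_le_maxcorr admissible_def)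
  have "(\<lambda>n. cmod (corr (\<sigma> n) (Xs n) (Ys n))) \<longlonglongrightarrow> cmod (corr \<rho> X Y)"
    by (intro tendsto_intros lim Xs Ys)
  then show ?thesis
    by (rule tendsto_le[OF trivial_limit_sequentially maxcorr_lim _ bound])
qed

subsection \<open>Vanishing maximal correlation\<close>

lemma centred_corr_eq_0:
  assumes dens: "density R"
    and uncorrelated: "\<And>X Y. admissible R X Y \<Longrightarrow> corr R X Y = 0"
    and centred: "mtrace (ptrB R ** X) = 0" "mtrace (ptrA R ** Y) = 0"
  shows "corr R X Y = 0"
proof -
  note nonneg = marginal_trace_form_nonneg[OF dens]
  consider "trace_form (ptrB R) X X = 0" | "trace_form (ptrA R) Y Y = 0"
    | "0 < Re (trace_form (ptrB R) X X)" "0 < Re (trace_form (ptrA R) Y Y)"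
    using nonneg(1,2)[of X] nonneg(3,4)[of Y] by (fastforce simp: complex_eq_iff)
  then show ?thesis
  proof cases
    case 1
    then show ?thesis
      unfolding corr_eq_trace_form trace_form_ptrB by (rule trace_form_null_left[OF dens])
  next
    case 2
    then show ?thesis
      unfolding corr_eq_trace_form trace_form_ptrA by (rule trace_form_null_right[OF dens])
  next
    case 3
    define s where "s = 1 / sqrt (Re (trace_form (ptrB R) X X))"
    define t where "t = 1 / sqrt (Re (trace_form (ptrA R) Y Y))"
    have "admissible R (mscale s X) (mscale t Y)"
      using centred 3 nonneg(1)[of X] nonneg(3)[of Y]
        trace_form_normalize[of "ptrB R" X] trace_form_normalize[of "ptrA R" Y]
      unfolding admissible_def s_def t_def by (simp add: mscale_mult_right mtrace_mscale)
    then have "s * cnj t * corr R X Y = 0"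
      using uncorrelated corr_mscale by metis
    moreover have "s \<noteq> 0" "t \<noteq> 0"
      using 3 by (simp_all add: s_def t_def)
    ultimately show ?thesis
      by simp
  qed
qed

definition munit :: "'m \<Rightarrow> 'n \<Rightarrow> complex^'n^'m" where
  "munit u w = (\<chi> i j. if i = u then if j = w then 1 else 0 else 0)"

lemma mtrace_mult_munit: "mtrace (A ** munit u w) = A $ w $ u"
  by (simp add: mtrace_def matrix_matrix_mult_def munit_def mult_delta_right)

lemma madj_munit: "madj (munit u w) = munit w u"
  by (simp add: madj_def munit_def vec_eq_iff)

lemma mtensor_munit: "mtensor (munit u w) (munit u' w') = munit (u, u') (w, w')"
  by (simp add: mtensor_def munit_def vec_eq_iff prod_eq_iff)

lemma product_state_if_centred_uncorrelated:
  assumes trace: "mtrace R = 1"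
    and uncorrelated: "\<And>X Y. mtrace (ptrB R ** X) = 0 \<Longrightarrow> mtrace (ptrA R ** Y) = 0 \<Longrightarrow> corr R X Y = 0"
  shows "R = mtensor (ptrB R) (ptrA R)"
proof -
  have "R $ (a, b) $ (a', b') = ptrB R $ a $ a' * ptrA R $ b $ b'" for a a' b b'
  proof -
    define c where "c = ptrB R $ a $ a'"
    define e where "e = ptrA R $ b' $ b"
    define X where "X = munit a' a - mscale c (mat 1)"
    define Y where "Y = munit b b' - mscale e (mat 1)"
    have "mtrace (ptrB R ** X) = 0" "mtrace (ptrA R ** Y) = 0"
      by (simp_all add: X_def Y_def c_def e_def mtrace_mult_diff mscale_mult_right mtrace_mscale
          mtrace_mult_munit mtrace_ptrB mtrace_ptrA trace)
    then have "corr R X Y = 0"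
      by (rule uncorrelated)
    moreover have "corr R X Y = R $ (a, b) $ (a', b') - c * ptrA R $ b $ b'"
      by (simp add: X_def Y_def madj_diff mtensor_diff_left mtensor_diff_right mtrace_mult_diff
          madj_mscale madj_munit madj_mat_1 mtensor_munit mtensor_mscale_left mtensor_mscale_right
          mscale_mult_right mtrace_mscale mtrace_mult_munit mtrace_mult_mtensor_mat_1_right
          mtrace_mult_mtensor_mat_1_left mtensor_mat_1 trace c_def)
    ultimately show ?thesis
      by (simp add: c_def)
  qed
  then show ?thesis
    by (simp add: vec_eq_iff mtensor_def split: prod.splits)
qed

theorem lemma2:
  fixes \<sigma> :: "nat \<Rightarrow> complex^('a::finite \<times> 'b::finite)^('a \<times> 'b)"
    and \<rho> :: "complex^('a \<times> 'b)^('a \<times> 'b)"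
    and lam :: real
  assumes "\<forall>n\<ge>1. density (\<sigma> n)"
    and "\<sigma> \<longlonglongrightarrow> \<rho>"
    and "(\<lambda>n. maxcorr (\<sigma> n)) \<longlonglongrightarrow> lam"
  shows "maxcorr \<rho> \<le> lam \<and> (lam = 0 \<longrightarrow> \<rho> = mtensor (ptrB \<rho>) (ptrA \<rho>))"
proof -
  have dens: "\<forall>\<^sub>F n in sequentially. density (\<sigma> n)"
    using assms(1) eventually_sequentially by blast
  have "0 \<le> lam"
    by (rule tendsto_lowerbound[OF assms(3) eventually_mono[OF dens maxcorr_nonneg] trivial_limit_sequentially])
  have bound: "cmod (corr \<rho> X Y) \<le> lam" if "admissible \<rho> X Y" for X Y
    by (rule admissible_corr_le_lim_maxcorr[OF dens assms(2,3) that])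
  have "\<rho> = mtensor (ptrB \<rho>) (ptrA \<rho>)" if "lam = 0"
  proof (rule product_state_if_centred_uncorrelated)
    have "density \<rho>"
      by (rule density_limit[OF dens assms(2)])
    then show "mtrace \<rho> = 1"
      by (simp add: density_def)
    show "corr \<rho> X Y = 0" if "mtrace (ptrB \<rho> ** X) = 0" "mtrace (ptrA \<rho> ** Y) = 0" for X Y
      using centred_corr_eq_0[OF \<open>density \<rho>\<close> _ that] bound \<open>lam = 0\<close> by simp
  qed
  with maxcorr_le[OF \<open>0 \<le> lam\<close> bound] show ?thesis
    by blast
qed

end
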